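(* Let $\mathcal X\subseteq\mathbb R^d$ be an input space, $\mathcal Y=\{1,\dots,C\}$ a finite label set, and $S:\mathcal X\times\mathcal Y\to\mathbb R$ a (non-conformity) score function. Let $(X,Y)\sim\mathcal P_{X,Y}$, and let $\epsilon\sim\mathcal P_\epsilon$ be a perturbation supported on $\mathcal E_r=\{\epsilon:\|\epsilon\|_2\le r\}$, independent of $(X,Y)$; write $Z=(X,Y,\epsilon)$ and $\widetilde X=X+\epsilon$. Fix $\alpha\in(0,1)$ and $s\in[0,\alpha]$, and set $\alpha^*_{\mathrm{aPR}}=1-\frac{1-\alpha}{1-\alpha+s}$. For $\tilde\alpha\in[0,1)$ define the robust quantile $$Q^{\mathrm{rob}}(X,Y;\tilde\alpha)=\min\{t:\ \mathbb P_\epsilon\{S(X+\epsilon,Y)\le t\}\ge 1-\tilde\alpha\},$$ and the threshold $$\tau^{\mathrm{aPR}}(\alpha;s)=\min\{t:\ \mathbb P_{X,Y}\{Q^{\mathrm{rob}}(X,Y;\alpha^*_{\mathrm{aPR}})\le t\}\ge 1-\alpha+s\}.$$ Let $\mathcal C^{\mathrm{aPR}}(\widetilde X)=\{y\in\mathcal Y: S(\widetilde X,y)\le \tau^{\mathrm{aPR}}(\alpha;s)\}$. Then $$\mathbb P_{X,Y,\epsilon}\{Y\in \mathcal C^{\mathrm{aPR}}(X+\epsilon)\}\ge 1-\alpha,$$ i.e. $\mathcal C^{\mathrm{aPR}}$ provides $(1-\alpha)$-probabilistically robust coverage.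
   Context: A prediction set map $\mathcal C$ provides $(1-\alpha)$-probabilistically robust coverage if $\mathbb P_{X,Y,\epsilon}\{Y\in\mathcal C(X+\epsilon)\}\ge 1-\alpha$, where the probability is over the joint distribution of $(X,Y)$ and the independent perturbation $\epsilon$. The quantities $Q^{\mathrm{rob}}$ and $\tau^{\mathrm{aPR}}$ are the (population) quantiles defined in the claim, assumed well-defined (finite). *)

theory Defs
  imports "HOL-Probability.Probability"
begin

definition alpha_star_aPR :: "real \<Rightarrow> real \<Rightarrow> real" where
  "alpha_star_aPR \<alpha> s = 1 - (1 - \<alpha>) / (1 - \<alpha> + s)"

text \<open>Robust quantile Q^rob(x,y; a) = min {t. P_eps{S(x+eps,y) <= t} >= 1 - a}
  (written as Inf; the minimum is attained whenever the set is nonempty).\<close>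
definition Qrob :: "('x::euclidean_space) measure \<Rightarrow> ('x \<Rightarrow> nat \<Rightarrow> real) \<Rightarrow> 'x \<Rightarrow> nat \<Rightarrow> real \<Rightarrow> real" where
  "Qrob Pe S x y a = Inf {t. measure Pe {e \<in> space Pe. S (x + e) y \<le> t} \<ge> 1 - a}"

definition tau_aPR :: "('x::euclidean_space \<times> nat) measure \<Rightarrow> 'x measure \<Rightarrow> ('x \<Rightarrow> nat \<Rightarrow> real)
    \<Rightarrow> real \<Rightarrow> real \<Rightarrow> real" where
  "tau_aPR P Pe S \<alpha> s = Inf {t. measure P {(x, y) \<in> space P. Qrob Pe S x y (alpha_star_aPR \<alpha> s) \<le> t}
                              \<ge> 1 - \<alpha> + s}"

definition C_aPR :: "nat \<Rightarrow> ('x::euclidean_space \<times> nat) measure \<Rightarrow> 'x measure \<Rightarrow> ('x \<Rightarrow> nat \<Rightarrow> real)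
    \<Rightarrow> real \<Rightarrow> real \<Rightarrow> 'x \<Rightarrow> nat set" where
  "C_aPR C P Pe S \<alpha> s xt = {y \<in> {1..C}. S xt y \<le> tau_aPR P Pe S \<alpha> s}"

end

theory Submission
  imports Defs
begin

text \<open>
  Both quantiles are infima of superlevel sets of distribution functions
  \<open>t \<mapsto> P{f \<le> t}\<close>, which are monotone and right-continuous, so the infima are attained:
  every \<open>(x, y)\<close> with \<open>Q\<^sup>r\<^sup>o\<^sup>b(x, y) \<le> \<tau>\<close> satisfies \<open>P\<^sub>\<epsilon>{S(x + \<epsilon>, y) \<le> \<tau>} \<ge> 1 - \<alpha>\<^sup>*\<close>, and these
  \<open>(x, y)\<close> have probability at least \<open>1 - \<alpha> + s\<close>. Integrating the inner bound over them
  (Tonelli) gives coverage at least \<open>(1 - \<alpha>\<^sup>*) (1 - \<alpha> + s) = 1 - \<alpha>\<close>.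
\<close>

lemma continuous_at_right_lowerbound:
  fixes F :: "real \<Rightarrow> real"
  assumes "continuous (at_right t) F" and "\<And>u. t < u \<Longrightarrow> c \<le> F u"
  shows "c \<le> F t"
proof (rule tendsto_lowerbound)
  show "(F \<longlongrightarrow> F t) (at_right t)"
    using assms(1) by (simp add: continuous_within)
  show "\<forall>\<^sub>F u in at_right t. c \<le> F u"
    using eventually_at_right_less by (rule eventually_mono) (rule assms(2))
qed simp

lemma mono_lowerbound_above_Inf:
  fixes F :: "real \<Rightarrow> real"
  assumes "mono F" and "continuous (at_right t) F"
    and "T \<noteq> {}" and "\<And>t'. t' \<in> T \<Longrightarrow> c \<le> F t'" and "Inf T \<le> t"
  shows "c \<le> F t"
proof (rule continuous_at_right_lowerbound[OF assms(2)])
  fix u assume "t < u"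
  then obtain t' where "t' \<in> T" "t' < u"
    using cInf_lessD[OF assms(3)] assms(5) by (meson order.strict_trans1)
  then show "c \<le> F u"
    using assms(4) monoD[OF assms(1), of t' u] by fastforce
qed

lemma (in finite_measure) continuous_at_right_measure_mono_family:
  fixes A :: "real \<Rightarrow> 'a set"
  assumes sets: "\<And>t. A t \<in> sets M" and "mono A" and right_closed: "(\<Inter>u\<in>{t<..}. A u) \<subseteq> A t"
  shows "continuous (at_right t) (\<lambda>t. measure M (A t))"
  unfolding continuous_within
proof (rule tendsto_at_right_sequentially[where b = "t + 1"])
  fix f :: "nat \<Rightarrow> real" assume f: "\<And>n. t < f n" "decseq f" "f \<longlonglongrightarrow> t"
  have "(\<lambda>n. measure M (A (f n))) \<longlonglongrightarrow> measure M (\<Inter>n. A (f n))"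
    using f(2) \<open>mono A\<close> sets by (intro finite_Lim_measure_decseq) (auto simp: decseq_def mono_def)
  also have "(\<Inter>n. A (f n)) = A t"
  proof
    show "(\<Inter>n. A (f n)) \<subseteq> A t"
    proof (intro subsetI right_closed[THEN subsetD] INT_I)
      fix x u assume x: "x \<in> (\<Inter>n. A (f n))" and "u \<in> {t<..}"
      have "\<forall>\<^sub>F n in sequentially. f n < u"
        using order_tendstoD(2)[OF f(3)] \<open>u \<in> {t<..}\<close> by simp
      then obtain n where "f n < u"
        by (auto simp: eventually_sequentially)
      then show "x \<in> A u" using x monoD[OF \<open>mono A\<close>, of "f n" u] by auto
    qed
    show "A t \<subseteq> (\<Inter>n. A (f n))"
      using f(1) monoD[OF \<open>mono A\<close>] by (auto intro: less_imp_le)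
  qed
  finally show "(\<lambda>n. measure M (A (f n))) \<longlonglongrightarrow> measure M (A t)" .
qed simp

lemma (in finite_measure) mono_measure_le:
  fixes f :: "'a \<Rightarrow> real"
  assumes "f \<in> borel_measurable M"
  shows "mono (\<lambda>t. measure M {x \<in> space M. f x \<le> t})"
  using assms by (intro monoI finite_measure_mono) auto

lemma (in finite_measure) continuous_at_right_measure_le:
  fixes f :: "'a \<Rightarrow> real"
  assumes "f \<in> borel_measurable M"
  shows "continuous (at_right t) (\<lambda>t. measure M {x \<in> space M. f x \<le> t})"
proof (rule continuous_at_right_measure_mono_family)
  show "{x \<in> space M. f x \<le> t} \<in> sets M" for t
    using assms by measurable
  show "mono (\<lambda>t. {x \<in> space M. f x \<le> t})"
    by (auto simp: mono_def)
  show "(\<Inter>u\<in>{t<..}. {x \<in> space M. f x \<le> u}) \<subseteq> {x \<in> space M. f x \<le> t}"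
  proof
    fix x assume x: "x \<in> (\<Inter>u\<in>{t<..}. {x \<in> space M. f x \<le> u})"
    then have "x \<in> space M"
      using INT_D[OF x, of "t + 1"] by simp
    moreover have "f x \<le> t"
      using x by (auto intro: dense_ge[where z = t])
    ultimately show "x \<in> {x \<in> space M. f x \<le> t}"
      by simp
  qed
qed

definition lower_quantile :: "'a measure \<Rightarrow> ('a \<Rightarrow> real) \<Rightarrow> real \<Rightarrow> real" where
  "lower_quantile M f p = Inf {t. p \<le> measure M {x \<in> space M. f x \<le> t}}"

lemma (in finite_measure) lower_quantile_le_imp_measure_ge:
  fixes f :: "'a \<Rightarrow> real"
  assumes "f \<in> borel_measurable M" and "{t. p \<le> measure M {x \<in> space M. f x \<le> t}} \<noteq> {}"
    and "lower_quantile M f p \<le> t"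
  shows "p \<le> measure M {x \<in> space M. f x \<le> t}"
  by (rule mono_lowerbound_above_Inf[where F = "\<lambda>t. measure M {x \<in> space M. f x \<le> t}", OF
        mono_measure_le[OF assms(1)] continuous_at_right_measure_le[OF assms(1)] assms(2)])
    (use assms(3) in \<open>auto simp: lower_quantile_def\<close>)

lemma measure_pair_ge_if_slices_ge:
  assumes "finite_measure M1" "finite_measure M2"
    and "E \<in> sets (M1 \<Otimes>\<^sub>M M2)" "B \<in> sets M1" "0 \<le> c"
    and "\<And>z. z \<in> B \<Longrightarrow> c \<le> measure M2 (Pair z -` E)"
  shows "c * measure M1 B \<le> measure (M1 \<Otimes>\<^sub>M M2) E"
proof -
  interpret M1: finite_measure M1 by fact
  interpret M2: finite_measure M2 by fact
  interpret M12: finite_measure "M1 \<Otimes>\<^sub>M M2"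
    using assms(2,1) by (rule finite_measure_pair_measure)
  have "ennreal c * emeasure M1 B = (\<integral>\<^sup>+z. ennreal c * indicator B z \<partial>M1)"
    using assms(4) by (simp add: nn_integral_cmult_indicator)
  also have "\<dots> \<le> (\<integral>\<^sup>+z. emeasure M2 (Pair z -` E) \<partial>M1)"
    using assms(6) by (intro nn_integral_mono)
      (auto split: split_indicator simp: M2.emeasure_eq_measure intro: ennreal_leI)
  also have "\<dots> = emeasure (M1 \<Otimes>\<^sub>M M2) E"
    using M2.emeasure_pair_measure_alt[OF assms(3)] ..
  finally have "ennreal (c * measure M1 B) \<le> ennreal (measure (M1 \<Otimes>\<^sub>M M2) E)"
    using assms(5) by (simp add: M1.emeasure_eq_measure M12.emeasure_eq_measure ennreal_mult)
  then show ?thesis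
    by (simp add: ennreal_le_iff)
qed

lemma (in sigma_finite_measure) borel_measurable_measure_slice_le:
  fixes g :: "'b \<Rightarrow> 'a \<Rightarrow> real"
  assumes "case_prod g \<in> borel_measurable (N \<Otimes>\<^sub>M M)"
  shows "(\<lambda>z. measure M {e \<in> space M. g z e \<le> t}) \<in> borel_measurable N"
proof -
  let ?Q = "{w \<in> space (N \<Otimes>\<^sub>M M). case_prod g w \<le> t}"
  have "?Q \<in> sets (N \<Otimes>\<^sub>M M)"
    using assms unfolding case_prod_beta' by measurable
  then have "(\<lambda>z. emeasure M (Pair z -` ?Q)) \<in> borel_measurable N"
    by (rule measurable_emeasure_Pair)
  moreover have "Pair z -` ?Q = {e \<in> space M. g z e \<le> t}" if "z \<in> space N" for z
    using that by (auto simp: space_pair_measure)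
  ultimately have "(\<lambda>z. emeasure M {e \<in> space M. g z e \<le> t}) \<in> borel_measurable N"
    by (simp cong: measurable_cong)
  then show ?thesis
    unfolding measure_def by (rule borel_measurable_enn2real)
qed

lemma superlevel_in_sets:
  fixes f :: "'a \<Rightarrow> real"
  assumes "L \<in> sets M" and "f \<in> borel_measurable M"
  shows "{z \<in> L. c \<le> f z} \<in> sets M"
proof -
  have "f -` {c..} \<inter> space M \<in> sets M"
    using assms(2) by (rule measurable_sets) (rule atLeast_borel)
  moreover have "{z \<in> L. c \<le> f z} = L \<inter> (f -` {c..} \<inter> space M)"
    using sets.sets_into_space[OF assms(1)] by auto
  ultimately show ?thesis
    using assms(1) by (simp add: sets.Int)
qed

text \<open>
  The inner quantile \<open>q\<close> need not be measurable, so \<open>{q \<le> t}\<close> is compared with the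
  measurable superlevel sets \<open>B t\<close>, which contain it almost everywhere and whose measure
  is right-continuous in \<open>t\<close>.
\<close>

lemma (in finite_measure) measure_superlevel_at_lower_quantile_ge:
  fixes F :: "'a \<Rightarrow> real \<Rightarrow> real"
  assumes L: "L \<in> sets M" "AE z in M. z \<in> L"
    and F_meas: "\<And>t. (\<lambda>z. F z t) \<in> borel_measurable M"
    and F_mono: "\<And>z. z \<in> L \<Longrightarrow> mono (F z)"
    and F_right_cont: "\<And>z t. z \<in> L \<Longrightarrow> continuous (at_right t) (F z)"
    and q: "\<And>z t. z \<in> L \<Longrightarrow> q z \<le> t \<Longrightarrow> c \<le> F z t"
    and q_ne: "{t. d \<le> measure M {z \<in> space M. q z \<le> t}} \<noteq> {}"
  shows "d \<le> measure M {z \<in> L. c \<le> F z (lower_quantile M q d)}"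
proof -
  define B where "B t = {z \<in> L. c \<le> F z t}" for t
  have B_sets: "B t \<in> sets M" for t
    unfolding B_def using L(1) F_meas by (rule superlevel_in_sets)
  have B_mono: "mono B"
  proof (rule monoI, rule subsetI)
    fix t t' z assume "t \<le> t'" and "z \<in> B t"
    then show "z \<in> B t'"
      using monoD[OF F_mono \<open>t \<le> t'\<close>, of z] by (auto simp: B_def)
  qed
  have B_right_closed: "(\<Inter>u\<in>{t<..}. B u) \<subseteq> B t" for t
  proof
    fix z assume z: "z \<in> (\<Inter>u\<in>{t<..}. B u)"
    then have "z \<in> L"
      using INT_D[OF z, of "t + 1"] by (simp add: B_def)
    moreover have "c \<le> F z t"
    proof (rule continuous_at_right_lowerbound[OF F_right_cont[OF \<open>z \<in> L\<close>]])
      show "c \<le> F z u" if "t < u" for u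
        using INT_D[OF z, of u] that by (simp add: B_def)
    qed
    ultimately show "z \<in> B t"
      by (simp add: B_def)
  qed
  have q_le_imp_B: "AE z in M. z \<in> {z \<in> space M. q z \<le> t} \<longrightarrow> z \<in> B t" for t
    using L(2) by eventually_elim (auto simp: B_def q)
  show ?thesis
    unfolding B_def[symmetric]
  proof (rule mono_lowerbound_above_Inf[where F = "\<lambda>t. measure M (B t)"])
    show "mono (\<lambda>t. measure M (B t))"
      using B_mono B_sets by (intro monoI finite_measure_mono) (auto dest: monoD)
    show "continuous (at_right (lower_quantile M q d)) (\<lambda>t. measure M (B t))"
      using B_sets B_mono B_right_closed by (rule continuous_at_right_measure_mono_family)
    show "d \<le> measure M (B t)" if "t \<in> {t. d \<le> measure M {z \<in> space M. q z \<le> t}}" for t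
      using that finite_measure_mono_AE[OF q_le_imp_B B_sets, of t] by simp
  qed (use q_ne in \<open>simp_all add: lower_quantile_def\<close>)
qed

lemma nested_lower_quantile_coverage:
  fixes g :: "'a \<Rightarrow> 'b \<Rightarrow> real"
  assumes "finite_measure M1" "finite_measure M2"
    and g: "case_prod g \<in> borel_measurable (M1 \<Otimes>\<^sub>M M2)"
    and L: "L \<in> sets M1" "AE z in M1. z \<in> L"
    and "0 \<le> c"
    and inner_ne: "\<And>z. z \<in> L \<Longrightarrow> {t. c \<le> measure M2 {e \<in> space M2. g z e \<le> t}} \<noteq> {}"
    and outer_ne: "{t. d \<le> measure M1 {z \<in> space M1. lower_quantile M2 (g z) c \<le> t}} \<noteq> {}"
  shows "c * d \<le> measure (M1 \<Otimes>\<^sub>M M2) {(z, e) \<in> space (M1 \<Otimes>\<^sub>M M2).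
           z \<in> L \<and> g z e \<le> lower_quantile M1 (\<lambda>z. lower_quantile M2 (g z) c) d}"
    (is "_ \<le> measure _ ?E")
proof -
  interpret M1: finite_measure M1 by fact
  interpret M2: finite_measure M2 by fact
  define \<tau> where "\<tau> = lower_quantile M1 (\<lambda>z. lower_quantile M2 (g z) c) d"
  define F where "F z t = measure M2 {e \<in> space M2. g z e \<le> t}" for z t
  define B where "B = {z \<in> L. c \<le> F z \<tau>}"
  have L_space: "L \<subseteq> space M1"
    using L(1) by (rule sets.sets_into_space)
  have g_slice: "g z \<in> borel_measurable M2" if "z \<in> L" for z
    using measurable_Pair2[OF g] L_space that by auto
  have F_meas: "(\<lambda>z. F z t) \<in> borel_measurable M1" for t
    unfolding F_def using g by (rule M2.borel_measurable_measure_slice_le)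
  have "d \<le> measure M1 B"
    unfolding B_def \<tau>_def
  proof (rule M1.measure_superlevel_at_lower_quantile_ge[OF L F_meas])
    show "mono (F z)" "continuous (at_right t) (F z)" if "z \<in> L" for z t
      unfolding F_def using g_slice[OF that]
      by (rule M2.mono_measure_le M2.continuous_at_right_measure_le)+
    show "c \<le> F z t" if "z \<in> L" "lower_quantile M2 (g z) c \<le> t" for z t
      unfolding F_def using that by (intro M2.lower_quantile_le_imp_measure_ge g_slice inner_ne)
  qed (rule outer_ne)
  then have "c * d \<le> c * measure M1 B"
    using \<open>0 \<le> c\<close> by (rule mult_left_mono)
  also have "\<dots> \<le> measure (M1 \<Otimes>\<^sub>M M2) ?E"
  proof (rule measure_pair_ge_if_slices_ge)
    have "?E = (L \<times> space M2) \<inter> {w \<in> space (M1 \<Otimes>\<^sub>M M2). case_prod g w \<le> \<tau>}"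
      using L_space by (auto simp: space_pair_measure \<tau>_def)
    also have "\<dots> \<in> sets (M1 \<Otimes>\<^sub>M M2)"
      using L(1) g unfolding case_prod_beta' by measurable
    finally show "?E \<in> sets (M1 \<Otimes>\<^sub>M M2)" .
    show "B \<in> sets M1"
      unfolding B_def using L(1) F_meas by (rule superlevel_in_sets)
    fix z assume "z \<in> B"
    then have "Pair z -` ?E = {e \<in> space M2. g z e \<le> \<tau>}" "c \<le> F z \<tau>"
      using L_space by (auto simp: B_def space_pair_measure \<tau>_def)
    then show "c \<le> measure M2 (Pair z -` ?E)"
      by (simp add: F_def)
  qed fact+
  finally show ?thesis .
qed
lemma borel_measurable_shifted_score:
  fixes S :: "'x::euclidean_space \<Rightarrow> 'y \<Rightarrow> real"
  assumes "sets P = sets (borel \<Otimes>\<^sub>M count_space UNIV)" and "sets Pe = sets borel"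
    and "(\<lambda>(x, y). S x y) \<in> borel_measurable (borel \<Otimes>\<^sub>M count_space UNIV)"
  shows "(\<lambda>((x, y), e). S (x + e) y) \<in> borel_measurable (P \<Otimes>\<^sub>M Pe)"
proof -
  have "(\<lambda>w. (fst (fst w) + snd w :: 'x, snd (fst w) :: 'y))
      \<in> (borel \<Otimes>\<^sub>M count_space UNIV) \<Otimes>\<^sub>M borel \<rightarrow>\<^sub>M borel \<Otimes>\<^sub>M count_space UNIV"
    by measurable
  from measurable_compose[OF this assms(3)] show ?thesis
    unfolding measurable_cong_sets[OF sets_pair_measure_cong[OF assms(1,2)] refl]
    by (simp add: case_prod_beta')
qed

lemma Qrob_eq_lower_quantile: "Qrob Pe S x y a = lower_quantile Pe (\<lambda>e. S (x + e) y) (1 - a)"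
  by (simp add: Qrob_def lower_quantile_def)

lemma tau_aPR_eq_lower_quantile:
  "tau_aPR P Pe S \<alpha> s = lower_quantile P (\<lambda>(x, y). Qrob Pe S x y (alpha_star_aPR \<alpha> s)) (1 - \<alpha> + s)"
  by (simp add: tau_aPR_def lower_quantile_def case_prod_beta')

theorem theorem1:
  fixes P :: "((real^'d::finite) \<times> nat) measure"
    and Pe :: "(real^'d) measure"
    and S :: "real^'d \<Rightarrow> nat \<Rightarrow> real"
    and C :: nat and r \<alpha> s :: real
  assumes "prob_space P" and "sets P = sets (borel \<Otimes>\<^sub>M count_space UNIV)"
    and "AE z in P. snd z \<in> {1..C}"
    and "prob_space Pe" and "sets Pe = sets borel"
    and "AE e in Pe. norm e \<le> r"
    and "(\<lambda>(x, y). S x y) \<in> borel_measurable (borel \<Otimes>\<^sub>M count_space UNIV)"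
    and "0 < \<alpha>" and "\<alpha> < 1" and "0 \<le> s" and "s \<le> \<alpha>"
    and "\<And>x y. y \<in> {1..C} \<Longrightarrow>
           {t. measure Pe {e \<in> space Pe. S (x + e) y \<le> t} \<ge> 1 - alpha_star_aPR \<alpha> s} \<noteq> {}"
    and "{t. measure P {(x, y) \<in> space P. Qrob Pe S x y (alpha_star_aPR \<alpha> s) \<le> t} \<ge> 1 - \<alpha> + s} \<noteq> {}"
  shows "measure (P \<Otimes>\<^sub>M Pe) {((x, y), e) \<in> space (P \<Otimes>\<^sub>M Pe). y \<in> C_aPR C P Pe S \<alpha> s (x + e)}
           \<ge> 1 - \<alpha>"
proof -
  let ?c = "1 - alpha_star_aPR \<alpha> s" and ?L = "UNIV \<times> {1..C}"
    and ?g = "\<lambda>(x, y) e. S (x + e) y"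
  have "1 - \<alpha> = ?c * (1 - \<alpha> + s)"
    using assms(8-11) by (simp add: alpha_star_aPR_def)
  also have "\<dots> \<le> measure (P \<Otimes>\<^sub>M Pe) {(z, e) \<in> space (P \<Otimes>\<^sub>M Pe).
      z \<in> ?L \<and> ?g z e \<le> lower_quantile P (\<lambda>z. lower_quantile Pe (?g z) ?c) (1 - \<alpha> + s)}"
  proof (rule nested_lower_quantile_coverage)
    show "case_prod ?g \<in> borel_measurable (P \<Otimes>\<^sub>M Pe)"
      using assms(2,5,7) by (rule borel_measurable_shifted_score)
    show "finite_measure P" "finite_measure Pe"
      using assms(1,4) by (simp_all add: prob_space_def)
    show "?L \<in> sets P" "AE z in P. z \<in> ?L"
      using assms(2,3) by (auto simp: mem_Times_iff)
    show "0 \<le> ?c"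
      using assms(8-11) by (simp add: alpha_star_aPR_def)
    show "{t. ?c \<le> measure Pe {e \<in> space Pe. ?g z e \<le> t}} \<noteq> {}" if "z \<in> ?L" for z
      using assms(12) that by (auto simp: case_prod_beta')
    show "{t. 1 - \<alpha> + s \<le> measure P {z \<in> space P. lower_quantile Pe (?g z) ?c \<le> t}} \<noteq> {}"
      using assms(13) by (simp add: Qrob_eq_lower_quantile case_prod_beta')
  qed
  also have "{(z, e) \<in> space (P \<Otimes>\<^sub>M Pe).
      z \<in> ?L \<and> ?g z e \<le> lower_quantile P (\<lambda>z. lower_quantile Pe (?g z) ?c) (1 - \<alpha> + s)}
    = {((x, y), e) \<in> space (P \<Otimes>\<^sub>M Pe). y \<in> C_aPR C P Pe S \<alpha> s (x + e)}"
    by (auto simp: C_aPR_def tau_aPR_eq_lower_quantile Qrob_eq_lower_quantile case_prod_beta')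
  finally show ?thesis .
qed

end
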